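(* Fix an architecture $(\mathbf d,\mathbf k,\mathbf s)$ of depth $N$, a loss $\ell:\mathbb{R}^{d_N}\times\mathbb{R}^{d_N}\to\mathbb{R}$, and data $X=(x_1,\dots,x_m)\in\mathbb{R}^{d_0\times m}$, $Y=(y_1,\dots,y_m)\in\mathbb{R}^{d_N\times m}$, and let $\mathcal{L}(\vec w)=\sum_{i=1}^m\ell(\Pi(\vec w)x_i,y_i)$. Assume that $XX^\top$ has full rank and that there exists a monotonically increasing function $h:\mathbb{R}\to\mathbb{R}_{\ge0}$ such that \[ \|WX-Y\|_1\le h\Big(\sum_{i=1}^m\ell(Wx_i,y_i)\Big)\qquad\text{for all } W\in\mathbb{R}^{d_N\times d_0}. \] Then there exists a non-decreasing function $g:\mathbb{R}\to\mathbb{R}_{\ge0}$ such that $\|\pi(\vec w)\|_1\le g(\mathcal{L}(\vec w))$ for all $\vec w\in\mathbb{R}^{\sum_{i=1}^N k_i}$.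
   Context: An architecture of depth $N$ is a triple $(\mathbf d,\mathbf k,\mathbf s)=((d_0,\dots,d_N),(k_1,\dots,k_N),(s_1,\dots,s_N))$ of positive integers with $d_i=\frac{d_{i-1}-k_i}{s_i}+1$. For a filter $w\in\mathbb{R}^{k}$ and stride $s$, the convolutional matrix $\Pi_{(d',d''),k,s}(w)\in\mathbb{R}^{d''\times d'}$ has entries $W_{j,(j-1)s+n}=w_n$ ($j\le d''$, $n\le k$) and zeros elsewhere. For $\vec w=(w^{(1)},\dots,w^{(N)})$, $w^{(i)}\in\mathbb{R}^{k_i}$, $\Pi(\vec w):=W_N\cdots W_1$ with $W_i=\Pi_{(d_{i-1},d_i),k_i,s_i}(w^{(i)})$; this is a convolutional matrix with stride $\prod_i s_i$ and filter width $k_v=k_1+\sum_{i=2}^N(k_i-1)\prod_{m=1}^{i-1}s_m$, and its filter is denoted $\pi(\vec w)\in\mathbb{R}^{k_v}$. For a matrix $A=(a_{ij})$, $\|A\|_1:=\sum_{i,j}|a_{ij}|$ (entrywise $\ell_1$-norm); for vectors $\|\cdot\|_1$ is the usual $\ell_1$-norm. *)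

theory Defs
  imports "Jordan_Normal_Form.DL_Rank"
begin

(* All matrices/vectors are Jordan_Normal_Form matrices/vectors, 0-based indices. *)

definition is_architecture :: "nat \<Rightarrow> (nat \<Rightarrow> nat) \<Rightarrow> (nat \<Rightarrow> nat) \<Rightarrow> (nat \<Rightarrow> nat) \<Rightarrow> bool" where
  "is_architecture N d k s \<longleftrightarrow>
     (\<forall>i\<le>N. 0 < d i) \<and>
     (\<forall>i\<in>{1..N}. 0 < k i \<and> 0 < s i \<and>
        real (d i) = (real (d (i - 1)) - real (k i)) / real (s i) + 1)"

(* Pi_{(d',d''),k,s}(w) in R^{d'' x d'}: (1-based) W_{j,(j-1)s+n} = w_n, zero elsewhere. *)
definition conv_mat :: "nat \<Rightarrow> nat \<Rightarrow> nat \<Rightarrow> nat \<Rightarrow> real vec \<Rightarrow> real mat" where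
  "conv_mat d' d'' k s w =
     mat d'' d' (\<lambda>(j, c). if j * s \<le> c \<and> c < j * s + k then w $ (c - j * s) else 0)"

fun net_mat :: "(nat \<Rightarrow> nat) \<Rightarrow> (nat \<Rightarrow> nat) \<Rightarrow> (nat \<Rightarrow> nat) \<Rightarrow> (nat \<Rightarrow> real vec) \<Rightarrow> nat \<Rightarrow> real mat" where
  "net_mat d k s w 0 = 1\<^sub>m (d 0)"
| "net_mat d k s w (Suc i) = conv_mat (d i) (d (Suc i)) (k (Suc i)) (s (Suc i)) (w (Suc i)) * net_mat d k s w i"

definition Pi_net :: "nat \<Rightarrow> (nat \<Rightarrow> nat) \<Rightarrow> (nat \<Rightarrow> nat) \<Rightarrow> (nat \<Rightarrow> nat) \<Rightarrow> (nat \<Rightarrow> real vec) \<Rightarrow> real mat" where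
  "Pi_net N d k s w = net_mat d k s w N"

definition filter_width :: "nat \<Rightarrow> (nat \<Rightarrow> nat) \<Rightarrow> (nat \<Rightarrow> nat) \<Rightarrow> nat" where
  "filter_width N k s = k 1 + (\<Sum>i = 2..N. (k i - 1) * (\<Prod>m = 1..i - 1. s m))"

definition pi_filter :: "nat \<Rightarrow> (nat \<Rightarrow> nat) \<Rightarrow> (nat \<Rightarrow> nat) \<Rightarrow> (nat \<Rightarrow> nat) \<Rightarrow> (nat \<Rightarrow> real vec) \<Rightarrow> real vec" where
  "pi_filter N d k s w = vec (filter_width N k s) (\<lambda>n. Pi_net N d k s w $$ (0, n))"

definition l1_vec :: "real vec \<Rightarrow> real" where
  "l1_vec v = (\<Sum>i < dim_vec v. \<bar>v $ i\<bar>)"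

definition l1_mat :: "real mat \<Rightarrow> real" where
  "l1_mat A = (\<Sum>i < dim_row A. \<Sum>j < dim_col A. \<bar>A $$ (i, j)\<bar>)"

definition emp_loss :: "(real vec \<Rightarrow> real vec \<Rightarrow> real) \<Rightarrow> real mat \<Rightarrow> real mat \<Rightarrow> real mat \<Rightarrow> real" where
  "emp_loss loss X Y W = (\<Sum>i < dim_col X. loss (mult_mat_vec W (col X i)) (col Y i))"

end

theory Submission
  imports Defs
begin

text \<open>The filter \<pi>(w) is a prefix of the first row of W = \<Pi>(w), so its l1-norm is at most
  that of W. Since X X^T is invertible, X has the right inverse R = X^T (X X^T)^-1, hence
  W = (W X) R and, the entrywise l1-norm being submultiplicative,
  |W|_1 \<le> |R|_1 (|W X - Y|_1 + |Y|_1) \<le> |R|_1 (h(\<L>(w)) + |Y|_1).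
  So g(t) = |R|_1 (h(t) + |Y|_1) works.\<close>

lemma l1_mat_nonneg: "0 \<le> l1_mat A"
  unfolding l1_mat_def by (intro sum_nonneg) auto

lemma l1_mat_mult_le:
  assumes A: "A \<in> carrier_mat n p" and B: "B \<in> carrier_mat p q"
  shows "l1_mat (A * B) \<le> l1_mat A * l1_mat B"
proof -
  have row_le: "(\<Sum>j<q. \<bar>B $$ (l, j)\<bar>) \<le> l1_mat B" if "l < p" for l
    using B that unfolding l1_mat_def carrier_matD[OF B]
    by (intro member_le_sum[where f = "\<lambda>l. \<Sum>j<q. \<bar>B $$ (l, j)\<bar>"]) (auto intro: sum_nonneg)
  have "l1_mat (A * B) = (\<Sum>i<n. \<Sum>j<q. \<bar>\<Sum>l<p. A $$ (i, l) * B $$ (l, j)\<bar>)"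
    unfolding l1_mat_def using A B
    by (auto simp: scalar_prod_def intro!: sum.cong) (simp add: lessThan_atLeast0)
  also have "\<dots> \<le> (\<Sum>i<n. \<Sum>j<q. \<Sum>l<p. \<bar>A $$ (i, l)\<bar> * \<bar>B $$ (l, j)\<bar>)"
    by (intro sum_mono) (metis (no_types, lifting) abs_mult sum.cong sum_abs)
  also have "\<dots> = (\<Sum>i<n. \<Sum>l<p. \<bar>A $$ (i, l)\<bar> * (\<Sum>j<q. \<bar>B $$ (l, j)\<bar>))"
    by (simp add: sum.swap[of _ "{..<q}"] sum_distrib_left)
  also have "\<dots> \<le> (\<Sum>i<n. \<Sum>l<p. \<bar>A $$ (i, l)\<bar> * l1_mat B)"
    by (intro sum_mono mult_left_mono row_le) auto
  also have "\<dots> = l1_mat A * l1_mat B"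
    using A by (simp add: l1_mat_def sum_distrib_right)
  finally show ?thesis .
qed

lemma l1_mat_le_diff_add:
  assumes A: "A \<in> carrier_mat n p" and B: "B \<in> carrier_mat n p"
  shows "l1_mat A \<le> l1_mat (A - B) + l1_mat B"
proof -
  have "l1_mat A = (\<Sum>i<n. \<Sum>j<p. \<bar>(A $$ (i, j) - B $$ (i, j)) + B $$ (i, j)\<bar>)"
    using A unfolding l1_mat_def by simp
  also have "\<dots> \<le> (\<Sum>i<n. \<Sum>j<p. \<bar>A $$ (i, j) - B $$ (i, j)\<bar> + \<bar>B $$ (i, j)\<bar>)"
    by (intro sum_mono abs_triangle_ineq)
  also have "\<dots> = l1_mat (A - B) + l1_mat B"
    using A B unfolding l1_mat_def by (simp add: sum.distrib)
  finally show ?thesis .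
qed

lemma l1_mat_le_via_right_inverse:
  assumes W: "W \<in> carrier_mat n p" and X: "X \<in> carrier_mat p m" and Y: "Y \<in> carrier_mat n m"
    and R: "R \<in> carrier_mat m p" and XR: "X * R = 1\<^sub>m p"
  shows "l1_mat W \<le> l1_mat R * (l1_mat (W * X - Y) + l1_mat Y)"
proof -
  have "W = (W * X) * R"
    using W X R XR by (simp add: assoc_mult_mat[OF W X R])
  then have "l1_mat W \<le> l1_mat (W * X) * l1_mat R"
    using l1_mat_mult_le[OF _ R, of "W * X" n] W X by simp
  also have "\<dots> \<le> (l1_mat (W * X - Y) + l1_mat Y) * l1_mat R"
    using W X by (intro mult_right_mono l1_mat_le_diff_add[OF _ Y] l1_mat_nonneg) auto
  finally show ?thesis by (simp add: mult.commute)
qed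

lemma right_inverse_of_full_rank_gram:
  fixes X :: "'a :: field mat"
  assumes X: "X \<in> carrier_mat n m" and rank: "vec_space.rank n (X * X\<^sup>T) = n"
  obtains R where "R \<in> carrier_mat m n" and "X * R = 1\<^sub>m n"
proof -
  have G: "X * X\<^sup>T \<in> carrier_mat n n" using X by simp
  have "det (X * X\<^sup>T) \<noteq> 0"
    using vec_space.det_rank_iff[OF G] rank by simp
  then have "X * X\<^sup>T \<in> Units (ring_mat TYPE('a) n undefined)"
    by (rule det_non_zero_imp_unit[OF G])
  then obtain B where B: "B \<in> carrier_mat n n" and GB: "X * X\<^sup>T * B = 1\<^sub>m n"
    by (auto simp: Units_def ring_mat_simps)
  show ?thesis
  proof
    show "X\<^sup>T * B \<in> carrier_mat m n" using X B by simp
    show "X * (X\<^sup>T * B) = 1\<^sub>m n"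
      using GB X B by (simp add: assoc_mult_mat[of X n m "X\<^sup>T" n B n])
  qed
qed

lemma net_mat_carrier: "net_mat d k s w j \<in> carrier_mat (d j) (d 0)"
  by (induction j) (auto simp: conv_mat_def)

text \<open>Unrolling the recursion d_(i-1) - 1 = s_i (d_i - 1) + (k_i - 1).\<close>

lemma architecture_input_dim_eq:
  assumes arch: "is_architecture N d k s" and "j \<le> N"
  shows "real (d 0) - 1 = (\<Sum>i = 1..j. real (k i - 1) * real (\<Prod>m = 1..i - 1. s m))
           + (real (d j) - 1) * real (\<Prod>m = 1..j. s m)"
  using assms(2)
proof (induction j)
  case 0
  then show ?case by simp
next
  case (Suc j)
  from arch Suc.prems have k: "0 < k (Suc j)" and s: "0 < s (Suc j)"
    and d: "real (d (Suc j)) = (real (d j) - real (k (Suc j))) / real (s (Suc j)) + 1"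
    unfolding is_architecture_def by auto
  from d s have step:
      "real (d j) - 1 = (real (d (Suc j)) - 1) * real (s (Suc j)) + (real (k (Suc j)) - 1)"
    by (simp add: field_simps)
  have "(\<Prod>m = 1..Suc j. s m) = (\<Prod>m = 1..j. s m) * s (Suc j)"
    by (simp add: prod.cl_ivl_Suc)
  with Suc.IH Suc.prems k show ?case
    by (simp add: step of_nat_diff algebra_simps)
qed

lemma filter_width_le_input_dim:
  assumes arch: "is_architecture N d k s" and N: "1 \<le> N"
  shows "filter_width N k s \<le> d 0"
proof -
  have dN: "0 < d N" and k1: "0 < k 1"
    using arch N unfolding is_architecture_def by auto
  have "(\<Sum>i = 1..N. real (k i - 1) * real (\<Prod>m = 1..i - 1. s m))
      = real (k 1 - 1) + (\<Sum>i = 2..N. real (k i - 1) * real (\<Prod>m = 1..i - 1. s m))"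
    using N by (simp add: sum.atLeast_Suc_atMost numeral_2_eq_2)
  moreover have "0 \<le> (real (d N) - 1) * real (\<Prod>m = 1..N. s m)"
    using dN by (simp add: prod_nonneg)
  ultimately have "real (filter_width N k s) \<le> real (d 0)"
    using architecture_input_dim_eq[OF arch order_refl] k1 unfolding filter_width_def
    by (simp add: of_nat_diff)
  then show ?thesis by simp
qed

lemma l1_vec_pi_filter_le_l1_mat:
  assumes arch: "is_architecture N d k s" and N: "1 \<le> N"
  shows "l1_vec (pi_filter N d k s w) \<le> l1_mat (Pi_net N d k s w)"
proof -
  let ?W = "Pi_net N d k s w"
  have "l1_vec (pi_filter N d k s w) = (\<Sum>n<filter_width N k s. \<bar>?W $$ (0, n)\<bar>)"
    unfolding l1_vec_def pi_filter_def by simp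
  also have "\<dots> \<le> (\<Sum>n<d 0. \<bar>?W $$ (0, n)\<bar>)"
    using filter_width_le_input_dim[OF arch N] by (intro sum_mono2) auto
  also have "\<dots> \<le> (\<Sum>i<d N. \<Sum>n<d 0. \<bar>?W $$ (i, n)\<bar>)"
    using arch unfolding is_architecture_def
    by (intro member_le_sum[where f = "\<lambda>i. \<Sum>n<d 0. \<bar>?W $$ (i, n)\<bar>"]) (auto intro: sum_nonneg)
  also have "\<dots> = l1_mat ?W"
    using net_mat_carrier[of d k s w N] unfolding l1_mat_def Pi_net_def by simp
  finally show ?thesis .
qed

theorem lemma3p6:
  fixes N m :: nat and d k s :: "nat \<Rightarrow> nat"
    and loss :: "real vec \<Rightarrow> real vec \<Rightarrow> real"
    and X Y :: "real mat" and h :: "real \<Rightarrow> real"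
  assumes "1 \<le> N"
    and "is_architecture N d k s"
    and "X \<in> carrier_mat (d 0) m" and "Y \<in> carrier_mat (d N) m"
    and "vec_space.rank (d 0) (X * X\<^sup>T) = d 0"
    and "mono h" and "\<forall>x. 0 \<le> h x"
    and "\<forall>W \<in> carrier_mat (d N) (d 0). l1_mat (W * X - Y) \<le> h (emp_loss loss X Y W)"
  shows "\<exists>g :: real \<Rightarrow> real. mono g \<and> (\<forall>x. 0 \<le> g x) \<and>
           (\<forall>w :: nat \<Rightarrow> real vec. (\<forall>i\<in>{1..N}. w i \<in> carrier_vec (k i)) \<longrightarrow>
              l1_vec (pi_filter N d k s w) \<le> g (emp_loss loss X Y (Pi_net N d k s w)))"
proof -
  obtain R where R: "R \<in> carrier_mat m (d 0)" and XR: "X * R = 1\<^sub>m (d 0)"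
    using right_inverse_of_full_rank_gram[OF assms(3,5)] .
  define g where "g t = l1_mat R * (h t + l1_mat Y)" for t
  have "mono g"
    using assms(6) l1_mat_nonneg[of R] unfolding g_def mono_def by (auto intro: mult_left_mono)
  moreover have "0 \<le> g t" for t
    unfolding g_def using assms(7) l1_mat_nonneg[of R] l1_mat_nonneg[of Y] by simp
  moreover have "l1_vec (pi_filter N d k s w) \<le> g (emp_loss loss X Y (Pi_net N d k s w))" for w
  proof -
    let ?W = "Pi_net N d k s w"
    have W: "?W \<in> carrier_mat (d N) (d 0)"
      unfolding Pi_net_def by (rule net_mat_carrier)
    have "l1_vec (pi_filter N d k s w) \<le> l1_mat ?W"
      by (rule l1_vec_pi_filter_le_l1_mat[OF assms(2,1)])
    also have "\<dots> \<le> l1_mat R * (l1_mat (?W * X - Y) + l1_mat Y)"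
      by (rule l1_mat_le_via_right_inverse[OF W assms(3,4) R XR])
    also have "\<dots> \<le> g (emp_loss loss X Y ?W)"
      unfolding g_def using assms(8) W l1_mat_nonneg[of R] by (intro mult_left_mono) auto
    finally show ?thesis .
  qed
  ultimately show ?thesis by blast
qed

end
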